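(* Let $A$ be an integral residuated $\vee$-semilattice. Then: (1) if $A$ is a $\to$-MTL-algebra, the $\to$-prime filters of $A$ are exactly the $\vee$-prime filters of $A$; (2) if $A$ is a $\leadsto$-MTL-algebra, the $\leadsto$-prime filters of $A$ are exactly the $\vee$-prime filters of $A$; (3) if $A$ is a pseudo MTL-algebra, the prime filters of $A$ are exactly the $\vee$-prime filters of $A$.
   Context: A residuated poset is a partially ordered semigroup $(A;\cdot,\le)$ with binary operations $\to,\leadsto$ such that $x\cdot y\le z$ iff $x\le y\to z$ iff $y\le x\leadsto z$. It is a residuated $\vee$-semilattice if $(A,\le)$ is a join-semilattice, and integral if it has a greatest element $1$ that is a multiplicative identity. A filter is a nonempty upward closed subset closed under $\cdot$. A filter $F$ is $\to$-prime if for all $x,y$, $x\to y\in F$ or $y\to x\in F$; $\leadsto$-prime if for all $x,y$, $x\leadsto y\in F$ or $y\leadsto x\in F$; prime if both; $\vee$-prime if $x\vee y\in F$ implies $x\in F$ or $y\in F$. $A$ is a $\to$-MTL-algebra if $(x\to y)\vee(y\to x)=1$ for all $x,y$; a $\leadsto$-MTL-algebra if $(x\leadsto y)\vee(y\leadsto x)=1$ for all $x,y$; a pseudo MTL-algebra if both. *)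

theory Defs
  imports Main
begin

text \<open>An algebra is given on the whole type 'a by: a relation le (partial order),
a multiplication m, residuals imp (\<rightarrow>) and limp (\<leadsto>), a binary join j
and a top element one.\<close>

definition res_poset ::
  "('a \<Rightarrow> 'a \<Rightarrow> bool) \<Rightarrow> ('a \<Rightarrow> 'a \<Rightarrow> 'a) \<Rightarrow> ('a \<Rightarrow> 'a \<Rightarrow> 'a) \<Rightarrow> ('a \<Rightarrow> 'a \<Rightarrow> 'a) \<Rightarrow> bool" where
  "res_poset le m imp limp \<longleftrightarrow>
     (\<forall>x. le x x) \<and>
     (\<forall>x y. le x y \<and> le y x \<longrightarrow> x = y) \<and>
     (\<forall>x y z. le x y \<and> le y z \<longrightarrow> le x z) \<and>
     (\<forall>x y z. m (m x y) z = m x (m y z)) \<and>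
     (\<forall>x y z. le x y \<longrightarrow> le (m x z) (m y z) \<and> le (m z x) (m z y)) \<and>
     (\<forall>x y z. (le (m x y) z \<longleftrightarrow> le x (imp y z)) \<and> (le (m x y) z \<longleftrightarrow> le y (limp x z)))"

definition is_join :: "('a \<Rightarrow> 'a \<Rightarrow> bool) \<Rightarrow> ('a \<Rightarrow> 'a \<Rightarrow> 'a) \<Rightarrow> bool" where
  "is_join le j \<longleftrightarrow> (\<forall>x y z. le x (j x y) \<and> le y (j x y) \<and> (le x z \<and> le y z \<longrightarrow> le (j x y) z))"

definition int_res_join_semilattice ::
  "('a \<Rightarrow> 'a \<Rightarrow> bool) \<Rightarrow> ('a \<Rightarrow> 'a \<Rightarrow> 'a) \<Rightarrow> ('a \<Rightarrow> 'a \<Rightarrow> 'a) \<Rightarrow> ('a \<Rightarrow> 'a \<Rightarrow> 'a)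
   \<Rightarrow> ('a \<Rightarrow> 'a \<Rightarrow> 'a) \<Rightarrow> 'a \<Rightarrow> bool" where
  "int_res_join_semilattice le m imp limp j one \<longleftrightarrow>
     res_poset le m imp limp \<and> is_join le j \<and>
     (\<forall>x. le x one) \<and> (\<forall>x. m one x = x \<and> m x one = x)"

definition is_filter :: "('a \<Rightarrow> 'a \<Rightarrow> bool) \<Rightarrow> ('a \<Rightarrow> 'a \<Rightarrow> 'a) \<Rightarrow> 'a set \<Rightarrow> bool" where
  "is_filter le m F \<longleftrightarrow> F \<noteq> {} \<and> (\<forall>x y. x \<in> F \<and> le x y \<longrightarrow> y \<in> F) \<and>
     (\<forall>x y. x \<in> F \<and> y \<in> F \<longrightarrow> m x y \<in> F)"

definition res_prime :: "('a \<Rightarrow> 'a \<Rightarrow> 'a) \<Rightarrow> 'a set \<Rightarrow> bool" where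
  "res_prime r F \<longleftrightarrow> (\<forall>x y. r x y \<in> F \<or> r y x \<in> F)"

definition join_prime :: "('a \<Rightarrow> 'a \<Rightarrow> 'a) \<Rightarrow> 'a set \<Rightarrow> bool" where
  "join_prime j F \<longleftrightarrow> (\<forall>x y. j x y \<in> F \<longrightarrow> x \<in> F \<or> y \<in> F)"

definition mtl_wrt :: "('a \<Rightarrow> 'a \<Rightarrow> 'a) \<Rightarrow> ('a \<Rightarrow> 'a \<Rightarrow> 'a) \<Rightarrow> 'a \<Rightarrow> bool" where
  "mtl_wrt r j one \<longleftrightarrow> (\<forall>x y. j (r x y) (r y x) = one)"

end

theory Submission
  imports Defs
begin

text \<open>Integrality gives \<open>(x \<rightarrow> y) \<cdot> (x \<or> y) \<le> y\<close>, so in a filter containing \<open>x \<or> y\<close>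
  either of \<open>x \<rightarrow> y\<close>, \<open>y \<rightarrow> x\<close> yields \<open>y\<close> or \<open>x\<close>: \<open>\<rightarrow>\<close>-prime filters are \<open>\<or>\<close>-prime.
  Conversely, in a \<open>\<rightarrow>\<close>-MTL-algebra \<open>(x \<rightarrow> y) \<or> (y \<rightarrow> x) = 1\<close> lies in every filter, so a
  \<open>\<or>\<close>-prime filter contains one of the two residuals. The \<open>\<leadsto>\<close> case is the same statement
  for the algebra with reversed multiplication, in which \<open>\<rightarrow>\<close> and \<open>\<leadsto>\<close> swap roles.\<close>

lemma join_prime_imp_res_prime:
  assumes "one \<in> F" and "mtl_wrt r j one" and "join_prime j F"
  shows "res_prime r F"
  using assms unfolding mtl_wrt_def join_prime_def res_prime_def by metis

lemma res_poset_reverse_mult: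
  assumes "res_poset le m imp limp"
  shows "res_poset le (\<lambda>x y. m y x) limp imp"
proof -
  have order: "\<forall>x. le x x" "\<forall>x y. le x y \<and> le y x \<longrightarrow> x = y"
      "\<forall>x y z. le x y \<and> le y z \<longrightarrow> le x z"
    and assoc: "\<And>x y z. m (m x y) z = m x (m y z)"
    and mono: "\<forall>x y z. le x y \<longrightarrow> le (m x z) (m y z) \<and> le (m z x) (m z y)"
    and res: "\<forall>x y z. (le (m x y) z \<longleftrightarrow> le x (imp y z)) \<and> (le (m x y) z \<longleftrightarrow> le y (limp x z))"
    using assms unfolding res_poset_def by blast+
  show ?thesis
    unfolding res_poset_def
  proof (intro conjI)
    show "\<forall>x y z. m z (m y x) = m (m z y) x"
      by (simp add: assoc)
    show "\<forall>x y z. le x y \<longrightarrow> le (m z x) (m z y) \<and> le (m x z) (m y z)"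
      using mono by blast
    show "\<forall>x y z. (le (m y x) z \<longleftrightarrow> le x (limp y z)) \<and> (le (m y x) z \<longleftrightarrow> le y (imp x z))"
      using res by blast
  qed (use order in blast)+
qed

lemma int_res_join_semilattice_reverse_mult:
  assumes "int_res_join_semilattice le m imp limp j one"
  shows "int_res_join_semilattice le (\<lambda>x y. m y x) limp imp j one"
  using assms res_poset_reverse_mult unfolding int_res_join_semilattice_def by blast

lemma is_filter_reverse_mult: "is_filter le (\<lambda>x y. m y x) F \<longleftrightarrow> is_filter le m F"
  unfolding is_filter_def by blast

locale integral_residuated_join_semilattice =
  fixes le :: "'a \<Rightarrow> 'a \<Rightarrow> bool" and m imp limp j :: "'a \<Rightarrow> 'a \<Rightarrow> 'a" and one :: 'a
  assumes int_res_join_semilattice: "int_res_join_semilattice le m imp limp j one"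
begin

lemma le_refl: "le x x"
  and le_antisym: "le x y \<Longrightarrow> le y x \<Longrightarrow> x = y"
  and mult_left_mono: "le x y \<Longrightarrow> le (m x z) (m y z)"
  and residuation_imp: "le (m x y) z \<longleftrightarrow> le x (imp y z)"
  and residuation_limp: "le (m x y) z \<longleftrightarrow> le y (limp x z)"
  using int_res_join_semilattice
  unfolding int_res_join_semilattice_def res_poset_def by blast+

lemma join_upper1: "le x (j x y)"
  and join_upper2: "le y (j x y)"
  and join_least: "le x z \<Longrightarrow> le y z \<Longrightarrow> le (j x y) z"
  using int_res_join_semilattice
  unfolding int_res_join_semilattice_def is_join_def by blast+

lemma le_one: "le x one"
  and mult_one_left: "m one x = x"
  using int_res_join_semilattice unfolding int_res_join_semilattice_def by blast+

lemma join_commute: "j x y = j y x"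
  by (intro le_antisym join_least join_upper1 join_upper2)

lemma imp_mult_join_le: "le (m (imp x y) (j x y)) y"
proof -
  have "le x (limp (imp x y) y)"
    using residuation_imp[of "imp x y" x y] residuation_limp[of "imp x y" x y] le_refl by simp
  moreover have "le y (limp (imp x y) y)"
    using mult_left_mono[OF le_one, of "imp x y" y] residuation_limp[of "imp x y" y y]
    by (simp add: mult_one_left)
  ultimately show ?thesis
    using residuation_limp[of "imp x y" "j x y" y] join_least by simp
qed

lemma one_in_filter: "is_filter le m F \<Longrightarrow> one \<in> F"
  using le_one unfolding is_filter_def by blast

lemma res_prime_imp_join_prime:
  assumes F: "is_filter le m F" and prime: "res_prime imp F"
  shows "join_prime j F"
  unfolding join_prime_def
proof (intro allI impI)
  have detach: "b \<in> F" if "imp a b \<in> F" and "j a b \<in> F" for a b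
  proof -
    have "m (imp a b) (j a b) \<in> F"
      using F that unfolding is_filter_def by blast
    then show ?thesis
      using F imp_mult_join_le unfolding is_filter_def by blast
  qed
  fix x y
  assume xy: "j x y \<in> F"
  then have yx: "j y x \<in> F"
    by (simp add: join_commute)
  from prime consider "imp x y \<in> F" | "imp y x \<in> F"
    unfolding res_prime_def by blast
  then show "x \<in> F \<or> y \<in> F"
    by cases (use detach xy yx in blast)+
qed

lemma res_prime_imp_iff_join_prime:
  assumes "mtl_wrt imp j one" and "is_filter le m F"
  shows "res_prime imp F \<longleftrightarrow> join_prime j F"
proof
  show "res_prime imp F \<Longrightarrow> join_prime j F"
    using assms(2) by (rule res_prime_imp_join_prime)
  show "join_prime j F \<Longrightarrow> res_prime imp F"
    using one_in_filter[OF assms(2)] assms(1) by (rule join_prime_imp_res_prime)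
qed

lemma res_prime_limp_iff_join_prime:
  assumes "mtl_wrt limp j one" and "is_filter le m F"
  shows "res_prime limp F \<longleftrightarrow> join_prime j F"
proof -
  interpret reverse: integral_residuated_join_semilattice le "\<lambda>x y. m y x" limp imp j one
    by unfold_locales (rule int_res_join_semilattice_reverse_mult[OF int_res_join_semilattice])
  show ?thesis
    using assms(1) is_filter_reverse_mult[THEN iffD2, OF assms(2)]
    by (rule reverse.res_prime_imp_iff_join_prime)
qed

end

theorem lemma5p4:
  fixes le :: "'a \<Rightarrow> 'a \<Rightarrow> bool" and m imp limp j :: "'a \<Rightarrow> 'a \<Rightarrow> 'a" and one :: 'a
  assumes A: "int_res_join_semilattice le m imp limp j one"
  shows "(mtl_wrt imp j one \<longrightarrow>
            (\<forall>F. is_filter le m F \<longrightarrow> (res_prime imp F \<longleftrightarrow> join_prime j F)))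
       \<and> (mtl_wrt limp j one \<longrightarrow>
            (\<forall>F. is_filter le m F \<longrightarrow> (res_prime limp F \<longleftrightarrow> join_prime j F)))
       \<and> (mtl_wrt imp j one \<and> mtl_wrt limp j one \<longrightarrow>
            (\<forall>F. is_filter le m F \<longrightarrow>
               (res_prime imp F \<and> res_prime limp F \<longleftrightarrow> join_prime j F)))"
proof -
  interpret integral_residuated_join_semilattice le m imp limp j one
    using A by unfold_locales
  show ?thesis
    by (simp add: res_prime_imp_iff_join_prime res_prime_limp_iff_join_prime)
qed

end
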